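(* In the discrete torus model with frame group $\mathbb{Z}_4$ and calculus $\{\bar1,\bar3\}$ (context), assume the reality condition $\overline{\Theta_a}=R_a\Theta_a$ ($a=1,2$). Then a torsion-free cotorsion-free connection (parametrised by $a,b$) satisfies the reality condition $A_{\bar1}^*=A_{\bar3}$ if and only if $\bar a=R_2a$ and $\bar b=R_1b$. Under these conditions the regularity condition $s_1\bar\partial^2a-s_2\bar\partial^1b=0$ is invariant under complex conjugation, and the function \[R=\partial^1b+\partial^2a+s_1R_1b+s_2R_2a-2bR_1b-2aR_2a\] satisfies $\bar R=R+\bar\partial^1\big(\partial^1b+s_1R_1b\big)+\bar\partial^2\big(\partial^2a+s_2R_2a\big)$; in particular $\sum_{x\in\Sigma}R(x)$ is real.
   Context: Discrete torus model: $\Sigma=\mathbb{Z}_2\times\mathbb{Z}_2$, $x\to y$ iff $y-x\in\{(1,0),(0,1)\}$; diagonal zweibein $e_{1,x,x+(1,0)}=\Theta_1(x)^{-1}$, $e_{2,x,x+(0,1)}=\Theta_2(x)^{-1}$, $\Theta_a$ nowhere-vanishing with $\Theta_1R_1\Theta_2=\Theta_2R_2\Theta_1$; $R_1f(x)=f(x+(1,0))$, $R_2f(x)=f(x+(0,1))$, $\bar\partial^a=R_a-\mathrm{id}$, $\partial^a=\Theta_a\bar\partial^a$, $s_1=\bar\partial^2\Theta_1$, $s_2=\bar\partial^1\Theta_2$; $e_af=R_a(f)e_a$, $\mathrm{d}f=\sum_a(\partial^af)e_a$. Frame group $\mathbb{Z}_4$ acting by quarter rotations with calculus $\{\bar1,\bar3\}$;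 the torsion-free cotorsion-free connections are $A_{\bar1}=(-\alpha-\frac{s_1}{2})e_1+(\beta-\frac{s_2}{2})e_2$, $A_{\bar3}=(\beta-\frac{s_1}{2})e_1+(\alpha-\frac{s_2}{2})e_2$ with $a=\alpha+\beta$, $b=\beta-\alpha$ satisfying $(R_1+R_2)a=(R_1+R_2)b=0$. The $*$-structure: complex conjugation $f\mapsto\bar f$ on functions, extended antilinearly and antimultiplicatively to forms with $e_a^*=e_a$, so $(fe_a)^*=e_a\bar f=R_a(\bar f)e_a$. The reality condition $\theta^*=\theta$ for $\theta=\Theta_1e_1+\Theta_2e_2$ is $\overline{\Theta_a}=R_a\Theta_a$; the reality condition on spin connections is $A_i^*=A_{i^{-1}}$, here $A_{\bar1}^*=A_{\bar3}$. *)

theory Defs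
  imports Complex_Main "HOL-Library.Numeral_Type"
begin

text \<open>The discrete torus Sigma = Z_2 x Z_2, modelled by the finite ring type 2.\<close>
type_synonym pt = "2 \<times> 2"

definition R1 :: "(pt \<Rightarrow> complex) \<Rightarrow> pt \<Rightarrow> complex" where
  "R1 f = (\<lambda>x. f (fst x + 1, snd x))"
definition R2 :: "(pt \<Rightarrow> complex) \<Rightarrow> pt \<Rightarrow> complex" where
  "R2 f = (\<lambda>x. f (fst x, snd x + 1))"

definition dbar1 :: "(pt \<Rightarrow> complex) \<Rightarrow> pt \<Rightarrow> complex" where
  "dbar1 f = (\<lambda>x. R1 f x - f x)"
definition dbar2 :: "(pt \<Rightarrow> complex) \<Rightarrow> pt \<Rightarrow> complex" where
  "dbar2 f = (\<lambda>x. R2 f x - f x)"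

definition conjf :: "(pt \<Rightarrow> complex) \<Rightarrow> pt \<Rightarrow> complex" where
  "conjf f = (\<lambda>x. cnj (f x))"

text \<open>A 1-form f_1 e_1 + f_2 e_2 (coefficients on the left) is represented by the pair (f_1, f_2).
  Its *-adjoint: (f e_a)^* = e_a conj f = R_a(conj f) e_a.\<close>
definition form_star :: "(pt \<Rightarrow> complex) \<times> (pt \<Rightarrow> complex) \<Rightarrow> (pt \<Rightarrow> complex) \<times> (pt \<Rightarrow> complex)" where
  "form_star A = (R1 (conjf (fst A)), R2 (conjf (snd A)))"

text \<open>Spin connections A_{1bar}, A_{3bar} with s_1 = dbar^2 Theta_1, s_2 = dbar^1 Theta_2.\<close>
definition A_1 :: "(pt \<Rightarrow> complex) \<Rightarrow> (pt \<Rightarrow> complex) \<Rightarrow> (pt \<Rightarrow> complex) \<Rightarrow> (pt \<Rightarrow> complex)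
    \<Rightarrow> (pt \<Rightarrow> complex) \<times> (pt \<Rightarrow> complex)" where
  "A_1 Th1 Th2 \<alpha> \<beta> = ((\<lambda>x. - \<alpha> x - dbar2 Th1 x / 2), (\<lambda>x. \<beta> x - dbar1 Th2 x / 2))"
definition A_3 :: "(pt \<Rightarrow> complex) \<Rightarrow> (pt \<Rightarrow> complex) \<Rightarrow> (pt \<Rightarrow> complex) \<Rightarrow> (pt \<Rightarrow> complex)
    \<Rightarrow> (pt \<Rightarrow> complex) \<times> (pt \<Rightarrow> complex)" where
  "A_3 Th1 Th2 \<alpha> \<beta> = ((\<lambda>x. \<beta> x - dbar2 Th1 x / 2), (\<lambda>x. \<alpha> x - dbar1 Th2 x / 2))"

end

theory Submission
  imports Defs
begin

(* On Z_2 x Z_2 the shifts R_1, R_2 are commuting involutions, so the reality conditions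
   cnj Th_a = R_a Th_a, cnj a = R_2 a, cnj b = R_1 b and torsion-freeness R_2 f = - R_1 f act as
   rewrite rules on the values at x, x + e_1, x + e_2, x + e_1 + e_2, and each identity is checked
   pointwise with them.
   Since cnj s_1 = R_1 s_1 and cnj s_2 = R_2 s_2, the s-terms cancel from the reality condition of
   the spin connection, which becomes cnj alpha = - R_1 beta, cnj beta = R_2 alpha; for
   a = alpha + beta, b = beta - alpha these are, up to a factor 2, the difference and the sum of
   cnj a = R_2 a and cnj b = R_1 b.
   The function R splits as F + G + H with F = d_1 b + s_1 R_1 b, G = d_2 a + s_2 R_2 a and
   H = - 2 b R_1 b - 2 a R_2 a, where cnj F = R_1 F, cnj G = R_2 G and cnj H = H. Hence
   cnj R = R + dbar_1 F + dbar_2 G, and the difference terms sum to zero over the torus. *)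

lemma add_one_add_one_2 [simp]: "(x::2) + 1 + 1 = x"
  by (simp add: add.assoc)

lemma half_diff_half_sum_eq_iff:
  fixes p q r s :: "'a::field_char_0"
  shows "(p - q) / 2 = (r - s) / 2 \<and> (p + q) / 2 = (r + s) / 2 \<longleftrightarrow> p = r \<and> q = s"
proof -
  have "(p - q) / 2 = (r - s) / 2 \<and> (p + q) / 2 = (r + s) / 2 \<longleftrightarrow> p - q = r - s \<and> p + q = r + s"
    by (simp only: divide_cancel_right) simp
  also have "\<dots> \<longleftrightarrow> p = r \<and> q = s"
  proof
    assume "p - q = r - s \<and> p + q = r + s"
    then have "(p - q) + (p + q) = (r - s) + (r + s)" "(p + q) - (p - q) = (r + s) - (r - s)"
      by simp_all
    then show "p = r \<and> q = s" by (simp add: mult_2[symmetric])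
  qed simp
  finally show ?thesis .
qed

lemma sum_R1: "(\<Sum>x\<in>UNIV. R1 f x) = (\<Sum>x\<in>UNIV. f x)"
  unfolding R1_def by (rule sum.reindex_bij_betw) (rule involuntory_imp_bij, simp)

lemma sum_R2: "(\<Sum>x\<in>UNIV. R2 f x) = (\<Sum>x\<in>UNIV. f x)"
  unfolding R2_def by (rule sum.reindex_bij_betw) (rule involuntory_imp_bij, simp)

lemma sum_dbar1_eq_0: "(\<Sum>x\<in>UNIV. dbar1 f x) = 0"
  by (simp add: dbar1_def sum_subtractf sum_R1)

lemma sum_dbar2_eq_0: "(\<Sum>x\<in>UNIV. dbar2 f x) = 0"
  by (simp add: dbar2_def sum_subtractf sum_R2)

lemma conjf_eq_R1_apply: "conjf f = R1 f \<Longrightarrow> cnj (f (u, v)) = f (u + 1, v)"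
  by (drule fun_cong[of _ _ "(u, v)"]) (simp add: conjf_def R1_def)

lemma conjf_eq_R2_apply: "conjf f = R2 f \<Longrightarrow> cnj (f (u, v)) = f (u, v + 1)"
  by (drule fun_cong[of _ _ "(u, v)"]) (simp add: conjf_def R2_def)

lemma R1_plus_R2_eq_0_apply:
  assumes "\<forall>x. R1 f x + R2 f x = 0"
  shows "f (u, v + 1) = - f (u + 1, v)"
  using assms[rule_format, of "(u, v)"] by (simp add: R1_def R2_def eq_neg_iff_add_eq_0 add.commute)

lemma form_star_A_1_eq_A_3_iff:
  assumes "conjf Th1 = R1 Th1" and "conjf Th2 = R2 Th2"
  shows "form_star (A_1 Th1 Th2 \<alpha> \<beta>) = A_3 Th1 Th2 \<alpha> \<beta>
    \<longleftrightarrow> conjf \<alpha> = (\<lambda>x. - R1 \<beta> x) \<and> conjf \<beta> = R2 \<alpha>"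
proof -
  have "form_star (A_1 Th1 Th2 \<alpha> \<beta>) = A_3 Th1 Th2 \<alpha> \<beta>
    \<longleftrightarrow> (\<forall>u v. - cnj (\<alpha> (u + 1, v)) = \<beta> (u, v)) \<and> (\<forall>u v. cnj (\<beta> (u, v + 1)) = \<alpha> (u, v))"
    using conjf_eq_R1_apply[OF assms(1)] conjf_eq_R2_apply[OF assms(2)]
    by (simp add: form_star_def A_1_def A_3_def R1_def R2_def dbar1_def dbar2_def conjf_def fun_eq_iff)
  also have "\<dots> \<longleftrightarrow> conjf \<alpha> = (\<lambda>x. - R1 \<beta> x) \<and> conjf \<beta> = R2 \<alpha>"
    by (simp add: fun_eq_iff conjf_def R1_def R2_def) (metis add_one_add_one_2 minus_minus)
  finally show ?thesis .
qed

lemma conjf_alpha_beta_iff_conjf_a_b: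
  fixes \<alpha> \<beta> a b :: "pt \<Rightarrow> complex"
  assumes a_def: "a = (\<lambda>x. \<alpha> x + \<beta> x)" and b_def: "b = (\<lambda>x. \<beta> x - \<alpha> x)"
    and tf_a: "\<forall>x. R1 a x + R2 a x = 0" and tf_b: "\<forall>x. R1 b x + R2 b x = 0"
  shows "conjf \<alpha> = (\<lambda>x. - R1 \<beta> x) \<and> conjf \<beta> = R2 \<alpha> \<longleftrightarrow> conjf a = R2 a \<and> conjf b = R1 b"
proof -
  have \<alpha>: "\<alpha> x = (a x - b x) / 2" and \<beta>: "\<beta> x = (a x + b x) / 2" for x
    by (simp_all add: a_def b_def field_simps)
  have pointwise: "(cnj (\<alpha> (u, v)) = - \<beta> (u + 1, v) \<and> cnj (\<beta> (u, v)) = \<alpha> (u, v + 1))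
    \<longleftrightarrow> (cnj (a (u, v)) = a (u, v + 1) \<and> cnj (b (u, v)) = b (u + 1, v))" for u v
  proof -
    have "cnj (\<alpha> (u, v)) = (cnj (a (u, v)) - cnj (b (u, v))) / 2"
      "cnj (\<beta> (u, v)) = (cnj (a (u, v)) + cnj (b (u, v))) / 2"
      by (simp_all add: \<alpha> \<beta>)
    moreover have "- \<beta> (u + 1, v) = (a (u, v + 1) - b (u + 1, v)) / 2"
      "\<alpha> (u, v + 1) = (a (u, v + 1) + b (u + 1, v)) / 2"
      unfolding \<alpha> \<beta> R1_plus_R2_eq_0_apply[OF tf_a] R1_plus_R2_eq_0_apply[OF tf_b]
      by (simp_all add: field_simps)
    ultimately show ?thesis by (simp only: half_diff_half_sum_eq_iff)
  qed
  show ?thesis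
    by (simp add: fun_eq_iff conjf_def R1_def R2_def all_conj_distrib[symmetric] pointwise)
qed

lemma conjf_regularity:
  fixes Th1 Th2 a b :: "pt \<Rightarrow> complex"
  assumes "conjf Th1 = R1 Th1" and "conjf Th2 = R2 Th2"
    and "conjf a = R2 a" and "conjf b = R1 b"
    and tf_a: "\<forall>x. R1 a x + R2 a x = 0" and tf_b: "\<forall>x. R1 b x + R2 b x = 0"
  defines "Q \<equiv> (\<lambda>x. dbar2 Th1 x * dbar2 a x - dbar1 Th2 x * dbar1 b x)"
  shows "conjf Q = (\<lambda>x. - R1 (R2 Q) x)"
  \<comment> \<open>Both products change sign: e.g. cnj (dbar2 Th1) = R1 (dbar2 Th1) = - R1 (R2 (dbar2 Th1)),
    whereas cnj (dbar2 a) = - dbar2 a = R1 (R2 (dbar2 a)) by the torsion-freeness of a.\<close>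
proof -
  note shift_rules = conjf_eq_R1_apply[OF assms(1)] conjf_eq_R2_apply[OF assms(2)]
    conjf_eq_R2_apply[OF assms(3)] conjf_eq_R1_apply[OF assms(4)]
    R1_plus_R2_eq_0_apply[OF tf_a] R1_plus_R2_eq_0_apply[OF tf_b]
  show ?thesis
    unfolding Q_def by (simp add: fun_eq_iff shift_rules R1_def R2_def dbar1_def dbar2_def conjf_def; algebra)
qed

lemma conjf_curvature:
  fixes Th1 Th2 a b :: "pt \<Rightarrow> complex"
  assumes "conjf Th1 = R1 Th1" and "conjf Th2 = R2 Th2"
    and "conjf a = R2 a" and "conjf b = R1 b"
  defines "F \<equiv> (\<lambda>x. Th1 x * dbar1 b x + dbar2 Th1 x * R1 b x)"
    and "G \<equiv> (\<lambda>x. Th2 x * dbar2 a x + dbar1 Th2 x * R2 a x)"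
    and "Rc \<equiv> (\<lambda>x. Th1 x * dbar1 b x + Th2 x * dbar2 a x + dbar2 Th1 x * R1 b x
                   + dbar1 Th2 x * R2 a x - 2 * b x * R1 b x - 2 * a x * R2 a x)"
  shows "conjf Rc = (\<lambda>x. Rc x + dbar1 F x + dbar2 G x)"
proof -
  define H where "H = (\<lambda>x. - 2 * b x * R1 b x - 2 * a x * R2 a x)"
  note cnj_shift = conjf_eq_R1_apply[OF assms(1)] conjf_eq_R2_apply[OF assms(2)]
    conjf_eq_R2_apply[OF assms(3)] conjf_eq_R1_apply[OF assms(4)]
  have "conjf F = R1 F"
    by (simp add: F_def fun_eq_iff cnj_shift conjf_def R1_def R2_def dbar1_def dbar2_def)
  moreover have "conjf G = R2 G"
    by (simp add: G_def fun_eq_iff cnj_shift conjf_def R1_def R2_def dbar1_def dbar2_def)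
  moreover have "conjf H = H"
    by (simp add: H_def fun_eq_iff cnj_shift conjf_def R1_def R2_def mult.commute)
  moreover have "Rc = (\<lambda>x. F x + G x + H x)"
    by (simp add: Rc_def F_def G_def H_def fun_eq_iff)
  ultimately show ?thesis
    by (simp add: fun_eq_iff conjf_def dbar1_def dbar2_def)
qed

lemma sum_in_Reals_if_conjf_eq_plus_dbar:
  assumes "conjf f = (\<lambda>x. f x + dbar1 F x + dbar2 G x)"
  shows "(\<Sum>x\<in>UNIV. f x) \<in> \<real>"
proof -
  have "cnj (\<Sum>x\<in>UNIV. f x) = (\<Sum>x\<in>UNIV. conjf f x)"
    by (simp add: conjf_def)
  also have "\<dots> = (\<Sum>x\<in>UNIV. f x) + (\<Sum>x\<in>UNIV. dbar1 F x) + (\<Sum>x\<in>UNIV. dbar2 G x)"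
    by (simp add: assms sum.distrib)
  also have "\<dots> = (\<Sum>x\<in>UNIV. f x)"
    by (simp add: sum_dbar1_eq_0 sum_dbar2_eq_0)
  finally show ?thesis
    by (simp add: Reals_cnj_iff)
qed

theorem proposition5p1:
  fixes Th1 Th2 \<alpha> \<beta> a b :: "pt \<Rightarrow> complex"
  defines "s1 \<equiv> dbar2 Th1" and "s2 \<equiv> dbar1 Th2"
  defines "d1 \<equiv> (\<lambda>f x. Th1 x * dbar1 f x)" and "d2 \<equiv> (\<lambda>f x. Th2 x * dbar2 f x)"
  defines "Q \<equiv> (\<lambda>x. s1 x * dbar2 a x - s2 x * dbar1 b x)"
  defines "Rc \<equiv> (\<lambda>x. d1 b x + d2 a x + s1 x * R1 b x + s2 x * R2 a x
                      - 2 * b x * R1 b x - 2 * a x * R2 a x)"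
  assumes nonvan1: "\<forall>x. Th1 x \<noteq> 0" and nonvan2: "\<forall>x. Th2 x \<noteq> 0"
    and zweibein: "\<forall>x. Th1 x * R1 Th2 x = Th2 x * R2 Th1 x"
    and real_theta1: "conjf Th1 = R1 Th1" and real_theta2: "conjf Th2 = R2 Th2"
    and a_def: "a = (\<lambda>x. \<alpha> x + \<beta> x)" and b_def: "b = (\<lambda>x. \<beta> x - \<alpha> x)"
    and tf_a: "\<forall>x. R1 a x + R2 a x = 0" and tf_b: "\<forall>x. R1 b x + R2 b x = 0"
  shows "(form_star (A_1 Th1 Th2 \<alpha> \<beta>) = A_3 Th1 Th2 \<alpha> \<beta>
            \<longleftrightarrow> (conjf a = R2 a \<and> conjf b = R1 b))
       \<and> ((conjf a = R2 a \<and> conjf b = R1 b) \<longrightarrow>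
            (conjf Q = (\<lambda>x. - R1 (R2 Q) x)
             \<and> (\<forall>x. Q x = 0) = (\<forall>x. cnj (Q x) = 0)
             \<and> conjf Rc = (\<lambda>x. Rc x + dbar1 (\<lambda>y. d1 b y + s1 y * R1 b y) x
                                   + dbar2 (\<lambda>y. d2 a y + s2 y * R2 a y) x)
             \<and> (\<Sum>x\<in>UNIV. Rc x) \<in> \<real>))"
proof -
  have "form_star (A_1 Th1 Th2 \<alpha> \<beta>) = A_3 Th1 Th2 \<alpha> \<beta> \<longleftrightarrow> conjf a = R2 a \<and> conjf b = R1 b"
    using form_star_A_1_eq_A_3_iff[OF real_theta1 real_theta2]
      conjf_alpha_beta_iff_conjf_a_b[OF a_def b_def tf_a tf_b]
    by simp
  moreover have "conjf Q = (\<lambda>x. - R1 (R2 Q) x)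
      \<and> (\<forall>x. Q x = 0) = (\<forall>x. cnj (Q x) = 0)
      \<and> conjf Rc = (\<lambda>x. Rc x + dbar1 (\<lambda>y. d1 b y + s1 y * R1 b y) x
                            + dbar2 (\<lambda>y. d2 a y + s2 y * R2 a y) x)
      \<and> (\<Sum>x\<in>UNIV. Rc x) \<in> \<real>"
    if real_a: "conjf a = R2 a" and real_b: "conjf b = R1 b"
  proof -
    have Rc: "conjf Rc = (\<lambda>x. Rc x + dbar1 (\<lambda>y. d1 b y + s1 y * R1 b y) x
                                + dbar2 (\<lambda>y. d2 a y + s2 y * R2 a y) x)"
      unfolding Rc_def d1_def d2_def s1_def s2_def
      by (rule conjf_curvature[OF real_theta1 real_theta2 real_a real_b])
    moreover have "conjf Q = (\<lambda>x. - R1 (R2 Q) x)"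
      unfolding Q_def s1_def s2_def
      by (rule conjf_regularity[OF real_theta1 real_theta2 real_a real_b tf_a tf_b])
    ultimately show ?thesis
      using sum_in_Reals_if_conjf_eq_plus_dbar[OF Rc] by simp
  qed
  ultimately show ?thesis by blast
qed

end
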